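(* In the basic hexagonal model, for a cell $c$ with set of direct neighbours $\mathcal{N}_c$, given the ignition times $\tau(n)$ for all $n\in\mathcal{N}_c$ (together with the initial values $x(c,0)$ and $y(n,0)$), the ignition time $\tau(c)$ can be calculated in constant time.
   Context: Basic hexagonal model: cells are hexagons, each with at most $6$ direct neighbours (cells sharing an edge). The state of cell $c$ at time $t\in\mathbb{N}$ is a pair of non-negative integers $x(c,t)$, $y(c,t)$; $c$ is burning if $x(c,t)=0<y(c,t)$, alive if $x(c,t),y(c,t)>0$, dead if $y(c,t)=0$. Transition: an alive cell's $x$-value decreases by the number of burning neighbours (clipped at $0$); a burning cell's $y$-value decreases by $1$. The ignition time $\tau(c)\in\mathbb{N}\cup\{\infty\}$ is the minimum $t$ with $x(c,t)=0$ ($\infty$ if none); it satisfies $\tau(c)=\min\{t\in\mathbb{N}: x(c,0)\le\sum_{n\in\mathcal{N}_c}\max(0,\min(t-\tau(n),y(n,0)))\}$, with $\tau(c)=\infty$ if this set is empty. Arithmetic operations on numbers take constant time. *)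

theory Defs
  imports Main "HOL-Library.Extended_Nat"
begin

text \<open>A neighbour is described by its ignition time tau(n) (an extended natural,
  infinity = never ignites) and its initial y-value y(n,0).\<close>

definition contrib :: "nat \<Rightarrow> enat \<times> nat \<Rightarrow> int" where
  "contrib t n = (case fst n of
       \<infinity> \<Rightarrow> 0
     | enat a \<Rightarrow> max 0 (min (int t - int a) (int (snd n))))"

definition ign_time :: "nat \<Rightarrow> (enat \<times> nat) list \<Rightarrow> enat" where
  "ign_time x ns =
     (if \<exists>t. int x \<le> sum_list (map (contrib t) ns)
      then enat (LEAST t. int x \<le> sum_list (map (contrib t) ns))
      else \<infinity>)"

datatype expr =
    Const int
  | XIn
  | TauIn nat           (* tau of the i-th neighbour (meaningful when finite) *)
  | YIn nat
  | Add expr expr | Sub expr expr | Mul expr expr | Div expr expr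

datatype cond = Le expr expr | IsInf nat

datatype prog = Out expr | OutInf | Branch cond prog prog

fun tau_val :: "enat \<Rightarrow> int" where
  "tau_val (enat a) = int a" | "tau_val \<infinity> = 0"

fun eeval :: "expr \<Rightarrow> nat \<Rightarrow> (enat \<times> nat) list \<Rightarrow> int" where
  "eeval (Const k) x ns = k"
| "eeval XIn x ns = int x"
| "eeval (TauIn i) x ns = (if i < length ns then tau_val (fst (ns ! i)) else 0)"
| "eeval (YIn i) x ns = (if i < length ns then int (snd (ns ! i)) else 0)"
| "eeval (Add a b) x ns = eeval a x ns + eeval b x ns"
| "eeval (Sub a b) x ns = eeval a x ns - eeval b x ns"
| "eeval (Mul a b) x ns = eeval a x ns * eeval b x ns"
| "eeval (Div a b) x ns = eeval a x ns div eeval b x ns"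

fun ceval :: "cond \<Rightarrow> nat \<Rightarrow> (enat \<times> nat) list \<Rightarrow> bool" where
  "ceval (Le a b) x ns = (eeval a x ns \<le> eeval b x ns)"
| "ceval (IsInf i) x ns = (i < length ns \<and> fst (ns ! i) = \<infinity>)"

fun run :: "prog \<Rightarrow> nat \<Rightarrow> (enat \<times> nat) list \<Rightarrow> int option" where
  "run (Out e) x ns = Some (eeval e x ns)"
| "run OutInf x ns = None"
| "run (Branch c p q) x ns = (if ceval c x ns then run p x ns else run q x ns)"

fun esize :: "expr \<Rightarrow> nat" where
  "esize (Add a b) = 1 + esize a + esize b"
| "esize (Sub a b) = 1 + esize a + esize b"
| "esize (Mul a b) = 1 + esize a + esize b"
| "esize (Div a b) = 1 + esize a + esize b"
| "esize _ = 1"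

fun csize :: "cond \<Rightarrow> nat" where
  "csize (Le a b) = 1 + esize a + esize b"
| "csize (IsInf i) = 1"

fun cost :: "prog \<Rightarrow> nat" where
  "cost (Out e) = esize e"
| "cost OutInf = 1"
| "cost (Branch c p q) = csize c + max (cost p) (cost q)"

end

theory Submission
  imports Defs
begin

text \<open>Write \<open>H(t) = (\<Sum>n. min (max 0 (t - \<tau>(n))) (y(n,0)))\<close> for the heat received by \<open>c\<close> up to
  time \<open>t\<close>, so that \<open>\<tau>(c)\<close> is the least \<open>t\<close> with \<open>x(c,0) \<le> H(t)\<close>. \<open>H\<close> is non-decreasing and
  piecewise linear: between \<open>t - 1\<close> and \<open>t\<close> it equals \<open>|S| t - \<Sum>\<^sub>S \<tau> + \<Sum>\<^sub>F y\<close>, where \<open>S\<close> are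
  the neighbours burning in that step and \<open>F\<close> those already burnt out. Hence \<open>\<tau>(c)\<close> is the ceiling
  of \<open>(x(c,0) - \<Sum>\<^sub>F y + \<Sum>\<^sub>S \<tau>) / |S|\<close> for some pair of sets \<open>S, F\<close> of neighbours, and it is the
  least such candidate that passes the test \<open>x(c,0) \<le> H\<close>. With at most six neighbours there are
  at most \<open>4\<^sup>6\<close> candidates, and minima, maxima and sign tests can all be written with
  \<open>+, -, *, div\<close>; only the question which neighbours never ignite needs branching.\<close>

lemma int_div_square_plus_one:
  fixes z :: int
  shows "z div (z * z + 1) = (if z < 0 then -1 else 0)"
proof (cases "z < 0")
  case True
  have "z div (z * z + 1) = (- z) div (- (z * z + 1))"
    by (simp only: div_minus_minus)
  also have "\<dots> = -1"
  proof (rule div_pos_neg_trivial)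
    have "1 * (- z) \<le> (- z) * (- z)"
      using True by (intro mult_right_mono) simp_all
    then show "- z + - (z * z + 1) \<le> 0"
      by simp
  qed (use True in simp)
  finally show ?thesis
    using True by simp
next
  case False
  then have "z < z * z + 1"
    by (smt (verit) mult_le_cancel_left1)
  with False show ?thesis
    by simp
qed

lemma ceiling_div_eqI:
  fixes N n t :: int
  assumes "0 < n" and "n * (t - 1) < N" and "N \<le> n * t"
  shows "(N + n - 1) div n = t"
proof -
  define r where "r = N + n - 1 - n * t"
  have "0 \<le> r" and "r < n"
    using assms by (simp_all add: r_def algebra_simps)
  moreover have "N + n - 1 = r + t * n"
    by (simp add: r_def algebra_simps)
  ultimately show ?thesis
    using \<open>0 < n\<close> by simp
qed

definition heat :: "'i set \<Rightarrow> ('i \<Rightarrow> int) \<Rightarrow> ('i \<Rightarrow> int) \<Rightarrow> int \<Rightarrow> int" where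
  "heat I a y t = (\<Sum>i\<in>I. min (max 0 (t - a i)) (y i))"

definition burning :: "'i set \<Rightarrow> ('i \<Rightarrow> int) \<Rightarrow> ('i \<Rightarrow> int) \<Rightarrow> int \<Rightarrow> 'i set" where
  "burning I a y t = {i \<in> I. a i < t \<and> t \<le> a i + y i}"

definition burnt_out :: "'i set \<Rightarrow> ('i \<Rightarrow> int) \<Rightarrow> ('i \<Rightarrow> int) \<Rightarrow> int \<Rightarrow> 'i set" where
  "burnt_out I a y t = {i \<in> I. a i + y i < t}"

definition root_candidate :: "('i \<Rightarrow> int) \<Rightarrow> ('i \<Rightarrow> int) \<Rightarrow> int \<Rightarrow> 'i set \<Rightarrow> 'i set \<Rightarrow> int" where
  "root_candidate a y x S F = (x - sum y F + sum a S + int (card S) - 1) div int (card S)"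

lemma mono_heat: "mono (heat I a y)"
  unfolding heat_def by (intro monoI sum_mono) auto

lemma heat_le_sum_fuel: "heat I a y t \<le> sum y I"
  unfolding heat_def by (intro sum_mono) simp

lemma heat_nonneg: "\<forall>i\<in>I. 0 \<le> y i \<Longrightarrow> 0 \<le> heat I a y t"
  unfolding heat_def by (intro sum_nonneg) simp

lemma heat_eq_0: "\<forall>i\<in>I. t \<le> a i \<and> 0 \<le> y i \<Longrightarrow> heat I a y t = 0"
  unfolding heat_def by (intro sum.neutral) simp

lemma heat_eq_sum_fuel: "\<forall>i\<in>I. a i + y i \<le> t \<Longrightarrow> heat I a y t = sum y I"
  unfolding heat_def by (intro sum.cong) auto

lemma heat_at_total_fuel_time:
  assumes "finite I" and "\<forall>i\<in>I. 0 \<le> a i \<and> 0 \<le> y i"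
  shows "heat I a y (\<Sum>i\<in>I. a i + y i) = sum y I"
proof (rule heat_eq_sum_fuel, intro ballI)
  fix i assume "i \<in> I"
  then show "a i + y i \<le> (\<Sum>i\<in>I. a i + y i)"
    using assms by (intro member_le_sum) auto
qed

lemma heat_linear_on_step:
  assumes "finite I" and "\<forall>i\<in>I. 0 \<le> y i" and "t - 1 \<le> s" and "s \<le> t"
  shows "heat I a y s = int (card (burning I a y t)) * s - sum a (burning I a y t)
           + sum y (burnt_out I a y t)"
proof -
  let ?S = "burning I a y t" and ?F = "burnt_out I a y t"
  have "?S \<subseteq> I" and "?F \<subseteq> I"
    unfolding burning_def burnt_out_def by auto
  have summand: "min (max 0 (s - a i)) (y i) = (if i \<in> ?S then s - a i else 0) + (if i \<in> ?F then y i else 0)"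
    if "i \<in> I" for i
    using that assms(2-4) unfolding burning_def burnt_out_def by auto
  have "heat I a y s = (\<Sum>i\<in>I. (if i \<in> ?S then s - a i else 0) + (if i \<in> ?F then y i else 0))"
    unfolding heat_def using summand by (rule sum.cong[OF refl])
  also have "\<dots> = (\<Sum>i\<in>?S. s - a i) + sum y ?F"
    using \<open>finite I\<close> \<open>?S \<subseteq> I\<close> \<open>?F \<subseteq> I\<close>
    by (simp add: sum.distrib Int_absorb1 flip: sum.inter_restrict)
  finally show ?thesis
    by (simp add: sum_subtractf)
qed

lemma root_candidate_burning_eq:
  assumes "finite I" and "\<forall>i\<in>I. 0 \<le> y i"
    and below: "heat I a y (t - 1) < x" and above: "x \<le> heat I a y t"
  shows "root_candidate a y x (burning I a y t) (burnt_out I a y t) = t"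
proof -
  let ?S = "burning I a y t" and ?F = "burnt_out I a y t"
  define n where "n = int (card ?S)"
  define N where "N = x - sum y ?F + sum a ?S"
  have linear: "heat I a y s = n * s - sum a ?S + sum y ?F" if "t - 1 \<le> s" and "s \<le> t" for s
    unfolding n_def using heat_linear_on_step[OF assms(1,2) that] .
  have "n * (t - 1) < N"
    using below linear[of "t - 1"] by (simp add: N_def)
  moreover have "N \<le> n * t"
    using above linear[of t] by (simp add: N_def)
  moreover have "0 < n"
    using calculation by (simp add: right_diff_distrib)
  ultimately have "(N + n - 1) div n = t"
    by (intro ceiling_div_eqI)
  then show ?thesis
    by (simp add: root_candidate_def n_def N_def)
qed

lemma heat_threshold_le:
  assumes "heat I a y (t - 1) < x" and "x \<le> heat I a y c"
  shows "t \<le> c"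
proof (rule ccontr)
  assume "\<not> t \<le> c"
  then have "c \<le> t - 1"
    by simp
  then have "heat I a y c \<le> heat I a y (t - 1)"
    by (rule monoD[OF mono_heat])
  with assms show False
    by simp
qed

lemma heat_threshold_exists:
  assumes "finite I" and nonneg: "\<forall>i\<in>I. 0 \<le> a i \<and> 0 \<le> y i"
    and "0 < x" and "x \<le> sum y I"
  obtains t where "0 < t" and "heat I a y (t - 1) < x" and "x \<le> heat I a y t"
proof -
  let ?P = "\<lambda>k::nat. x \<le> heat I a y (int k)"
  define B where "B = (\<Sum>i\<in>I. a i + y i)"
  have "0 \<le> B"
    unfolding B_def using nonneg by (intro sum_nonneg) auto
  then have "?P (nat B)"
    using \<open>x \<le> sum y I\<close> heat_at_total_fuel_time[OF \<open>finite I\<close> nonneg] by (simp add: B_def)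
  moreover have "heat I a y 0 = 0"
    using nonneg by (intro heat_eq_0) simp
  then have "\<not> ?P 0"
    using \<open>0 < x\<close> by simp
  ultimately obtain k where "\<not> ?P k" and "?P (Suc k)"
    using ex_least_nat_less[of ?P "nat B"] by blast
  then show ?thesis
    by (intro that[of "int (Suc k)"]) simp_all
qed

lemma Min_selected_candidates_eq_threshold:
  assumes "finite I" and nonneg: "\<forall>i\<in>I. 0 \<le> a i \<and> 0 \<le> y i"
    and "finite C" and candidates: "\<forall>S\<subseteq>I. \<forall>F\<subseteq>I. root_candidate a y x S F \<in> C"
    and below: "heat I a y (t - 1) < x" and above: "x \<le> heat I a y t"
  shows "Min (insert (\<Sum>i\<in>I. a i + y i)
           ((\<lambda>c. if x \<le> heat I a y c then c else (\<Sum>i\<in>I. a i + y i)) ` C)) = t"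
proof (rule Min_eqI)
  let ?B = "\<Sum>i\<in>I. a i + y i"
  have "x \<le> heat I a y ?B"
    using above heat_le_sum_fuel[of I a y t] heat_at_total_fuel_time[OF assms(1,2)] by simp
  then have "t \<le> ?B"
    by (rule heat_threshold_le[OF below])
  then show "t \<le> c" if "c \<in> insert ?B ((\<lambda>c. if x \<le> heat I a y c then c else ?B) ` C)" for c
    using that heat_threshold_le[OF below] by auto
  have "burning I a y t \<subseteq> I" and "burnt_out I a y t \<subseteq> I"
    unfolding burning_def burnt_out_def by auto
  then have "root_candidate a y x (burning I a y t) (burnt_out I a y t) \<in> C"
    using candidates by blast
  then have "t \<in> C"
    using root_candidate_burning_eq[OF \<open>finite I\<close> _ below above] nonneg by simp
  then show "t \<in> insert ?B ((\<lambda>c. if x \<le> heat I a y c then c else ?B) ` C)"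
    using above by (auto intro: rev_image_eqI)
qed (use \<open>finite C\<close> in simp)

text \<open>Expressions have no comparisons; signs are detected by \<open>z div (z * z + 1)\<close>, which is \<open>-1\<close> for
  \<open>z < 0\<close> and \<open>0\<close> otherwise.\<close>

definition enonneg :: "expr \<Rightarrow> expr" where
  "enonneg e = Add (Const 1) (Div e (Add (Mul e e) (Const 1)))"

definition emax0 :: "expr \<Rightarrow> expr" where
  "emax0 e = Mul e (enonneg e)"

definition emin :: "expr \<Rightarrow> expr \<Rightarrow> expr" where
  "emin e f = Sub e (emax0 (Sub e f))"

definition eif_nonneg :: "expr \<Rightarrow> expr \<Rightarrow> expr \<Rightarrow> expr" where
  "eif_nonneg c e f = Add (Mul (enonneg c) e) (Mul (Sub (Const 1) (enonneg c)) f)"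

definition esum :: "(nat \<Rightarrow> expr) \<Rightarrow> nat list \<Rightarrow> expr" where
  "esum f js = foldr (\<lambda>i e. Add (f i) e) js (Const 0)"

definition emins :: "expr list \<Rightarrow> expr \<Rightarrow> expr" where
  "emins es d = foldr emin es d"

lemma eeval_enonneg [simp]: "eeval (enonneg e) x ns = (if 0 \<le> eeval e x ns then 1 else 0)"
  by (simp add: enonneg_def int_div_square_plus_one)

lemma eeval_emax0 [simp]: "eeval (emax0 e) x ns = max 0 (eeval e x ns)"
  by (simp add: emax0_def)

lemma eeval_emin [simp]: "eeval (emin e f) x ns = min (eeval e x ns) (eeval f x ns)"
  by (simp add: emin_def)

lemma eeval_eif_nonneg [simp]:
  "eeval (eif_nonneg c e f) x ns = (if 0 \<le> eeval c x ns then eeval e x ns else eeval f x ns)"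
  by (simp add: eif_nonneg_def)

lemma eeval_esum [simp]: "eeval (esum f js) x ns = (\<Sum>i\<leftarrow>js. eeval (f i) x ns)"
  by (induction js) (simp_all add: esum_def)

lemma eeval_emins [simp]:
  "eeval (emins es d) x ns = Min (insert (eeval d x ns) ((\<lambda>e. eeval e x ns) ` set es))"
  by (induction es) (simp_all add: emins_def insert_commute)

definition nb_tau :: "(enat \<times> nat) list \<Rightarrow> nat \<Rightarrow> int" where
  "nb_tau ns i = (if i < length ns then tau_val (fst (ns ! i)) else 0)"

definition nb_fuel :: "(enat \<times> nat) list \<Rightarrow> nat \<Rightarrow> int" where
  "nb_fuel ns i = (if i < length ns then int (snd (ns ! i)) else 0)"

definition igniting :: "(enat \<times> nat) list \<Rightarrow> nat set" where
  "igniting ns = {i. i < length ns \<and> fst (ns ! i) \<noteq> \<infinity>}"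

lemma finite_igniting: "finite (igniting ns)"
  by (simp add: igniting_def)

declare eeval.simps(3,4) [simp del]

lemma eeval_TauIn [simp]: "eeval (TauIn i) x ns = nb_tau ns i"
  by (simp add: eeval.simps(3) nb_tau_def)

lemma eeval_YIn [simp]: "eeval (YIn i) x ns = nb_fuel ns i"
  by (simp add: eeval.simps(4) nb_fuel_def)

lemma nb_tau_nonneg: "0 \<le> nb_tau ns i"
proof -
  have "0 \<le> tau_val e" for e
    by (cases e) simp_all
  then show ?thesis
    by (simp add: nb_tau_def)
qed

lemma nb_fuel_nonneg: "0 \<le> nb_fuel ns i"
  by (simp add: nb_fuel_def)

lemma sum_contrib_eq_heat:
  "sum_list (map (contrib t) ns) = heat (igniting ns) (nb_tau ns) (nb_fuel ns) (int t)"
proof -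
  have "sum_list (map (contrib t) ns) = (\<Sum>i\<in>{..<length ns}. contrib t (ns ! i))"
    by (simp add: sum_list_sum_nth atLeast0LessThan)
  also have "\<dots> = (\<Sum>i\<in>igniting ns. contrib t (ns ! i))"
    by (rule sum.mono_neutral_right) (auto simp: igniting_def contrib_def)
  also have "\<dots> = heat (igniting ns) (nb_tau ns) (nb_fuel ns) (int t)"
    unfolding heat_def
    by (rule sum.cong) (auto simp: igniting_def contrib_def nb_tau_def nb_fuel_def)
  finally show ?thesis .
qed

lemma ign_time_eq_heat:
  "ign_time x ns =
     (if \<exists>t. int x \<le> heat (igniting ns) (nb_tau ns) (nb_fuel ns) (int t)
      then enat (LEAST t. int x \<le> heat (igniting ns) (nb_tau ns) (nb_fuel ns) (int t))
      else \<infinity>)"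
  by (simp add: ign_time_def sum_contrib_eq_heat)

lemma Least_heat_threshold:
  assumes "heat I a y (t - 1) < x" and "x \<le> heat I a y t" and "0 \<le> t"
  shows "(LEAST k::nat. x \<le> heat I a y (int k)) = nat t"
proof (rule Least_equality)
  show "x \<le> heat I a y (int (nat t))"
    using assms by simp
  show "nat t \<le> k" if "x \<le> heat I a y (int k)" for k
    using heat_threshold_le[OF assms(1) that] by simp
qed

definition eheat :: "nat list \<Rightarrow> expr \<Rightarrow> expr" where
  "eheat L c = esum (\<lambda>i. emin (emax0 (Sub c (TauIn i))) (YIn i)) L"

definition ebound :: "nat list \<Rightarrow> expr" where
  "ebound L = esum (\<lambda>i. Add (TauIn i) (YIn i)) L"

fun ecandidate :: "nat list \<times> nat list \<Rightarrow> expr" where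
  "ecandidate (S, F) =
     Div (Sub (Add (Add (Sub XIn (esum YIn F)) (esum TauIn S)) (Const (int (length S)))) (Const 1))
         (Const (int (length S)))"

text \<open>Candidates failing the test are replaced by \<open>ebound L\<close>, a time at which all fuel is spent.\<close>

definition eign :: "nat list \<Rightarrow> expr" where
  "eign L = emins
     (map (\<lambda>SF. eif_nonneg (Sub (eheat L (ecandidate SF)) XIn) (ecandidate SF) (ebound L))
        (List.product (subseqs L) (subseqs L)))
     (ebound L)"

lemma eeval_eheat:
  "distinct L \<Longrightarrow> eeval (eheat L c) x ns = heat (set L) (nb_tau ns) (nb_fuel ns) (eeval c x ns)"
  by (simp add: eheat_def heat_def sum_list_distinct_conv_sum_set)

lemma eeval_ebound:
  "distinct L \<Longrightarrow> eeval (ebound L) x ns = (\<Sum>i\<in>set L. nb_tau ns i + nb_fuel ns i)"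
  by (simp add: ebound_def sum_list_distinct_conv_sum_set)

lemma eeval_ecandidate:
  assumes "distinct S" and "distinct F"
  shows "eeval (ecandidate (S, F)) x ns = root_candidate (nb_tau ns) (nb_fuel ns) (int x) (set S) (set F)"
  using assms by (simp add: root_candidate_def sum_list_distinct_conv_sum_set distinct_card)

lemma eeval_eign:
  assumes "distinct L"
    and below: "heat (set L) (nb_tau ns) (nb_fuel ns) (t - 1) < int x"
    and above: "int x \<le> heat (set L) (nb_tau ns) (nb_fuel ns) t"
  shows "eeval (eign L) x ns = t"
proof -
  let ?H = "heat (set L) (nb_tau ns) (nb_fuel ns)"
    and ?B = "\<Sum>i\<in>set L. nb_tau ns i + nb_fuel ns i"
    and ?C = "(\<lambda>SF. eeval (ecandidate SF) x ns) ` set (List.product (subseqs L) (subseqs L))"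
  have select: "eeval (eif_nonneg (Sub (eheat L (ecandidate SF)) XIn) (ecandidate SF) (ebound L)) x ns
      = (\<lambda>c. if int x \<le> ?H c then c else ?B) (eeval (ecandidate SF) x ns)" for SF
    using \<open>distinct L\<close> by (simp add: eeval_eheat eeval_ebound)
  have "eeval (eign L) x ns = Min (insert ?B ((\<lambda>c. if int x \<le> ?H c then c else ?B) ` ?C))"
    unfolding eign_def eeval_emins set_map image_image select eeval_ebound[OF \<open>distinct L\<close>] ..
  also have "\<dots> = t"
  proof (rule Min_selected_candidates_eq_threshold[OF _ _ _ _ below above])
    show "\<forall>S\<subseteq>set L. \<forall>F\<subseteq>set L. root_candidate (nb_tau ns) (nb_fuel ns) (int x) S F \<in> ?C"
    proof (intro allI impI)
      fix S F assume "S \<subseteq> set L" and "F \<subseteq> set L"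
      then obtain Sl Fl where "Sl \<in> set (subseqs L)" "set Sl = S" "Fl \<in> set (subseqs L)" "set Fl = F"
        by (metis imageE subset_subseqs)
      moreover from this have "distinct Sl" and "distinct Fl"
        using \<open>distinct L\<close> by (simp_all add: subseqs_distinctD)
      ultimately show "root_candidate (nb_tau ns) (nb_fuel ns) (int x) S F \<in> ?C"
        using eeval_ecandidate[of Sl Fl x ns]
        by (intro rev_image_eqI[of "(Sl, Fl)"]) (simp_all del: ecandidate.simps)
    qed
  qed (simp_all add: nb_tau_nonneg nb_fuel_nonneg)
  finally show ?thesis .
qed

definition leaf :: "nat list \<Rightarrow> prog" where
  "leaf L = Branch (Le XIn (Const 0)) (Out (Const 0))
     (Branch (Le XIn (esum YIn L)) (Out (eign L)) OutInf)"

definition computes_ign_time :: "prog \<Rightarrow> nat \<Rightarrow> (enat \<times> nat) list \<Rightarrow> bool" where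
  "computes_ign_time P x ns \<longleftrightarrow>
     (case run P x ns of
        None \<Rightarrow> ign_time x ns = \<infinity>
      | Some v \<Rightarrow> 0 \<le> v \<and> ign_time x ns = enat (nat v))"

lemma computes_ign_time_leaf:
  assumes "distinct L" and L: "set L = igniting ns"
  shows "computes_ign_time (leaf L) x ns"
proof -
  let ?H = "heat (igniting ns) (nb_tau ns) (nb_fuel ns)"
  have nonneg: "\<forall>i\<in>igniting ns. 0 \<le> nb_tau ns i \<and> 0 \<le> nb_fuel ns i"
    by (simp add: nb_tau_nonneg nb_fuel_nonneg)
  have fuel: "eeval (esum YIn L) x ns = sum (nb_fuel ns) (igniting ns)"
    using assms by (simp add: sum_list_distinct_conv_sum_set)
  consider "x = 0" | "0 < x" "int x \<le> sum (nb_fuel ns) (igniting ns)"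
    | "sum (nb_fuel ns) (igniting ns) < int x"
    by linarith
  then show ?thesis
  proof cases
    case 1
    have "int x \<le> ?H (int 0)"
      using 1 nonneg by (simp add: heat_nonneg)
    then have "(\<exists>t. int x \<le> ?H (int t)) \<and> (LEAST t. int x \<le> ?H (int t)) = 0"
      by (blast intro: Least_eq_0)
    then have "ign_time x ns = enat 0"
      by (simp add: ign_time_eq_heat)
    then show ?thesis
      using 1 by (simp add: computes_ign_time_def leaf_def)
  next
    case 2
    then obtain t where "0 < t" and below: "?H (t - 1) < int x" and above: "int x \<le> ?H t"
      using heat_threshold_exists[OF finite_igniting nonneg, of "int x"] by auto
    then have "\<exists>k. int x \<le> ?H (int k)"
      using \<open>0 < t\<close> by (intro exI[of _ "nat t"]) simp
    then have "ign_time x ns = enat (nat t)"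
      using Least_heat_threshold[OF below above] \<open>0 < t\<close> by (simp add: ign_time_eq_heat)
    moreover have "eeval (eign L) x ns = t"
      using eeval_eign[OF \<open>distinct L\<close>] below above L by simp
    ultimately show ?thesis
      using 2 \<open>0 < t\<close> fuel by (simp add: computes_ign_time_def leaf_def)
  next
    case 3
    have "?H (int k) < int x" for k
      using heat_le_sum_fuel[of "igniting ns" "nb_tau ns" "nb_fuel ns" "int k"] 3 by linarith
    then have "ign_time x ns = \<infinity>"
      by (simp add: ign_time_eq_heat not_le)
    moreover have "0 \<le> sum (nb_fuel ns) (igniting ns)"
      by (simp add: sum_nonneg nb_fuel_nonneg)
    ultimately show ?thesis
      using 3 fuel by (simp add: computes_ign_time_def leaf_def)
  qed
qed

fun build :: "nat list \<Rightarrow> nat list \<Rightarrow> prog" where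
  "build [] L = leaf L"
| "build (i # js) L = Branch (IsInf i) (build js L) (build js (i # L))"

lemma run_build:
  "run (build js L) x ns = run (leaf (rev (filter (\<lambda>i. \<not> ceval (IsInf i) x ns) js) @ L)) x ns"
  by (induction js arbitrary: L) simp_all

definition ign_time_prog :: "nat \<Rightarrow> prog" where
  "ign_time_prog k = build [0..<k] []"

lemma computes_ign_time_prog:
  assumes "length ns = k"
  shows "computes_ign_time (ign_time_prog k) x ns"
proof -
  let ?L = "rev (filter (\<lambda>i. \<not> ceval (IsInf i) x ns) [0..<k])"
  have "distinct ?L" and "set ?L = igniting ns"
    using assms by (auto simp: igniting_def)
  then show ?thesis
    unfolding computes_ign_time_def ign_time_prog_def run_build
    using computes_ign_time_leaf[unfolded computes_ign_time_def] by simp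
qed

theorem lemma4:
  shows "\<exists>C::nat. \<forall>k\<le>6. \<exists>P. cost P \<le> C \<and>
           (\<forall>x ns. length ns = k \<longrightarrow>
              (case run P x ns of None \<Rightarrow> ign_time x ns = \<infinity>
                                | Some v \<Rightarrow> v \<ge> 0 \<and> ign_time x ns = enat (nat v)))"
proof -
  define C where "C = Max ((\<lambda>k. cost (ign_time_prog k)) ` {..6})"
  have "cost (ign_time_prog k) \<le> C" if "k \<le> 6" for k
    unfolding C_def using that by (intro Max_ge) auto
  moreover have "computes_ign_time (ign_time_prog k) x ns" if "length ns = k" for k x ns
    using that by (rule computes_ign_time_prog)
  ultimately show ?thesis
    unfolding computes_ign_time_def by blast
qed

end
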